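(* Let $M=\{M_\gamma\}_{\gamma\in\Gamma}$ and $N=\{N_\omega\}_{\omega\in\Omega}$ be defining families of functions on $\mathbb R^{k_1}$ and $\mathbb R^{k_2}$ respectively, and let $h\in\mathcal K(M\otimes N)$. Suppose $N$ satisfies: (I) for every $\omega\in\Omega$ there exist $\omega'\in\Omega$ and a bounded integrable nonnegative function $L$ on $\mathbb R^{k_2}$ with $N_\omega\le LN_{\omega'}$ and $L(y)\to0$ as $|y|\to\infty$; (II) for every $\omega\in\Omega$ there exist $\omega'\in\Omega$, a neighborhood $B$ of the origin in $\mathbb R^{k_2}$ and $C>0$ with $N_\omega(y)\le CN_{\omega'}(y+y')$ for all $y\in\mathbb R^{k_2}$, $y'\in B$. Then $h(x,\cdot)\in\mathcal K(N)$ for every $x\in\mathbb R^{k_1}$, and for every $v\in\mathcal K'(N)$ the function $h_v(x)=\langle v,h(x,\cdot)\rangle$ belongs to $\mathcal K(M)$. Moreover, for every multi-index $\mu\in\mathbb Z_+^{k_1}$, $\partial^\mu h_v(x)=\langle v,\partial^\mu_x h(x,\cdot)\rangle$.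
   Context: A defining family of functions on $\mathbb R^k$ is a family $M=\{M_\gamma\}_{\gamma\in\Gamma}$ of nonnegative measurable functions on $\mathbb R^k$, each bounded on bounded subsets of $\mathbb R^k$, such that: (a) for all $\gamma_1,\gamma_2\in\Gamma$ there are $\gamma\in\Gamma$ and $C>0$ with $M_\gamma\ge C(M_{\gamma_1}+M_{\gamma_2})$; (b) there is a countable $\Gamma'\subset\Gamma$ such that for every $\gamma\in\Gamma$ there are $\gamma'\in\Gamma'$ and $C>0$ with $CM_\gamma\le M_{\gamma'}$; (c) for every $x\in\mathbb R^k$ there are $\gamma\in\Gamma$, a neighborhood $O(x)$ of $x$ and $C>0$ with $M_\gamma(x')\ge C$ for all $x'\in O(x)$. $\mathcal K(M)$ is the space of smooth functions $f$ on $\mathbb R^k$ with finite seminorms $\|f\|_{\gamma,m}=\sup_{x\in\mathbb R^k,|\mu|\le m}M_\gamma(x)|\partial^\mu f(x)|$ for all $\gamma\in\Gamma$, $m\in\mathbb Z_+$, topologized by these seminorms; $\mathcal K'(N)$ is the continuous dual of $\mathcal K(N)$ and $\langle\cdot,\cdot\rangle$ the dual pairing. $M\otimes N$ is the family $\{(M\otimes N)_{\gamma\omega}\}_{(\gamma,\omega)\in\Gamma\times\Omega}$ on $\mathbb R^{k_1+k_2}$ given by $(M\otimes N)_{\gamma\omega}(x,y)=M_\gamma(x)N_\omega(y)$ (it is a defining family on $\mathbb R^{k_1+k_2}$). *)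

theory Defs
  imports "HOL-Analysis.Analysis"
begin

text \<open>Functions on R^n are modelled as functions on real^'n ('n a finite index type).
 Test functions are complex valued.\<close>

definition dpart :: "'n::finite \<Rightarrow> (real^'n \<Rightarrow> 'b::real_normed_vector) \<Rightarrow> real^'n \<Rightarrow> 'b" where
  "dpart i f x = vector_derivative (\<lambda>t::real. f (x + t *\<^sub>R axis i (1::real))) (at 0)"

fun diter :: "'n::finite list \<Rightarrow> (real^'n \<Rightarrow> 'b::real_normed_vector) \<Rightarrow> real^'n \<Rightarrow> 'b" where
  "diter [] f = f"
| "diter (i # ds) f = dpart i (diter ds f)"

definition smooth_fun :: "(real^'n::finite \<Rightarrow> 'b::real_normed_vector) \<Rightarrow> bool" where
  "smooth_fun f \<longleftrightarrow> (\<forall>ds. continuous_on UNIV (diter ds f) \<and>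
      (\<forall>i x. (\<lambda>t::real. diter ds f (x + t *\<^sub>R axis i (1::real))) differentiable (at 0)))"

text \<open>Partial derivative for a multi-index mu :: 'n => nat (order irrelevant for smooth f).\<close>
definition dmulti :: "('n::finite \<Rightarrow> nat) \<Rightarrow> (real^'n \<Rightarrow> 'b::real_normed_vector) \<Rightarrow> real^'n \<Rightarrow> 'b" where
  "dmulti mu f = diter (SOME ds. \<forall>i. count_list ds i = mu i) f"

definition mi_abs :: "('n::finite \<Rightarrow> nat) \<Rightarrow> nat" where
  "mi_abs mu = (\<Sum>i\<in>UNIV. mu i)"

definition defining_family :: "('g \<Rightarrow> real^'n::finite \<Rightarrow> real) \<Rightarrow> bool" where
  "defining_family M \<longleftrightarrow>
     (\<forall>g x. 0 \<le> M g x) \<and>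
     (\<forall>g. M g \<in> borel_measurable lborel) \<and>
     (\<forall>g S. bounded S \<longrightarrow> bounded (M g ` S)) \<and>
     (\<forall>g1 g2. \<exists>g C. C > 0 \<and> (\<forall>x. M g x \<ge> C * (M g1 x + M g2 x))) \<and>
     (\<exists>G'. countable G' \<and> (\<forall>g. \<exists>g'\<in>G'. \<exists>C>0. \<forall>x. C * M g x \<le> M g' x)) \<and>
     (\<forall>x. \<exists>g U C. open U \<and> x \<in> U \<and> C > 0 \<and> (\<forall>x'\<in>U. M g x' \<ge> C))"

definition seminorm_K :: "('g \<Rightarrow> real^'n::finite \<Rightarrow> real) \<Rightarrow> 'g \<Rightarrow> nat \<Rightarrow> (real^'n \<Rightarrow> complex) \<Rightarrow> real" where
  "seminorm_K M g m f = Sup {M g x * norm (dmulti mu f x) | x mu. mi_abs mu \<le> m}"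

definition in_K :: "('g \<Rightarrow> real^'n::finite \<Rightarrow> real) \<Rightarrow> (real^'n \<Rightarrow> complex) \<Rightarrow> bool" where
  "in_K M f \<longleftrightarrow> smooth_fun f \<and>
     (\<forall>g m. bdd_above {M g x * norm (dmulti mu f x) | x mu. mi_abs mu \<le> m})"

text \<open>Continuous linear functionals on K(N): linear, and continuous for the locally
 convex topology given by the seminorms, i.e. bounded by finitely many seminorms.\<close>
definition in_K_dual :: "('g \<Rightarrow> real^'n::finite \<Rightarrow> real) \<Rightarrow> ((real^'n \<Rightarrow> complex) \<Rightarrow> complex) \<Rightarrow> bool" where
  "in_K_dual N v \<longleftrightarrow>
     (\<forall>f g. in_K N f \<longrightarrow> in_K N g \<longrightarrow> v (\<lambda>y. f y + g y) = v f + v g) \<and>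
     (\<forall>c f. in_K N f \<longrightarrow> v (\<lambda>y. c * f y) = c * v f) \<and>
     (\<exists>F C. finite F \<and> C \<ge> 0 \<and>
        (\<forall>f. in_K N f \<longrightarrow> norm (v f) \<le> C * (\<Sum>(w,m)\<in>F. seminorm_K N w m f)))"

definition vjoin :: "real^'a::finite \<Rightarrow> real^'b::finite \<Rightarrow> real^('a + 'b)" where
  "vjoin x y = (\<chi> i. case i of Inl a \<Rightarrow> x $ a | Inr b \<Rightarrow> y $ b)"

definition vfst :: "real^('a::finite + 'b::finite) \<Rightarrow> real^'a" where
  "vfst z = (\<chi> a. z $ Inl a)"

definition vsnd :: "real^('a::finite + 'b::finite) \<Rightarrow> real^'b" where
  "vsnd z = (\<chi> b. z $ Inr b)"

definition tensor_family :: "('g \<Rightarrow> real^'a::finite \<Rightarrow> real) \<Rightarrow> ('w \<Rightarrow> real^'b::finite \<Rightarrow> real)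
    \<Rightarrow> ('g \<times> 'w) \<Rightarrow> real^('a + 'b) \<Rightarrow> real" where
  "tensor_family M N = (\<lambda>(g,w) z. M g (vfst z) * N w (vsnd z))"

definition mi_lift_left :: "('a::finite \<Rightarrow> nat) \<Rightarrow> ('a + 'b::finite) \<Rightarrow> nat" where
  "mi_lift_left mu = (\<lambda>i. case i of Inl a \<Rightarrow> mu a | Inr b \<Rightarrow> 0)"

end

theory Submission
  imports Defs "HOL-Library.Multiset"
begin

(* Some M_g is positive near x, so the bounds expressing h in K(M (x) N) show that the
   slice h(x,.) lies in K(N).  A functional v in K'(N) is dominated by finitely many seminorms of
   K(N), so x |-> <v, h(x,.)> is continuous (differentiable) as soon as x |-> h(x,.) is continuous
   (differentiable) as a map into K(N).  For the weighted norms N_w(y) |d^nu_y h(x',y) - d^nu_y h(x,y)|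
   this is uniform continuity of d^nu_y h on compact sets where |y| <= R, while for |y| >= R
   hypothesis (I) gives N_w <= eps N_w' and N_w'(y) |d^nu_y h(x',y)| stays bounded for x' near x.
   Differentiability reduces to this continuity, applied to d_(x_i) h, by the mean value theorem;
   iterating gives d^mu h_v = <v, d^mu_x h>, and the K(M) bounds of h_v follow from those of h
   because v is dominated by seminorms. *)

section \<open>Partial derivatives of smooth functions\<close>

lemma diter_append: "diter (ds @ es) f = diter ds (diter es f)"
  by (induction ds) auto

lemma smooth_fun_diter: "smooth_fun f \<Longrightarrow> smooth_fun (diter ds f)"
  unfolding smooth_fun_def by (simp flip: diter_append)

lemma smooth_fun_continuous_on: "smooth_fun f \<Longrightarrow> continuous_on UNIV (diter ds f)"
  unfolding smooth_fun_def by blast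

lemma smooth_fun_has_vector_derivative:
  fixes f :: "real^'n::finite \<Rightarrow> 'b::real_normed_vector"
  assumes "smooth_fun f"
  shows "((\<lambda>t. f (p + t *\<^sub>R axis i 1)) has_vector_derivative dpart i f (p + t0 *\<^sub>R axis i 1)) (at t0)"
proof -
  let ?q = "p + t0 *\<^sub>R axis i (1::real)"
  have "(\<lambda>t. diter [] f (?q + t *\<^sub>R axis i 1)) differentiable (at 0)"
    using assms unfolding smooth_fun_def by blast
  then have "((\<lambda>t. f (?q + t *\<^sub>R axis i 1)) has_vector_derivative dpart i f ?q) (at ((\<lambda>t. t - t0) t0))"
    by (simp add: dpart_def vector_derivative_works)
  then have "((\<lambda>t. f (?q + t *\<^sub>R axis i 1)) \<circ> (\<lambda>t. t - t0) has_vector_derivative 1 *\<^sub>R dpart i f ?q) (at t0)"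
    by (intro vector_diff_chain_at) (auto intro!: derivative_eq_intros)
  moreover have "(\<lambda>t. f (?q + t *\<^sub>R axis i 1)) \<circ> (\<lambda>t. t - t0) = (\<lambda>t. f (p + t *\<^sub>R axis i 1))"
    by (auto simp: o_def algebra_simps)
  ultimately show ?thesis by simp
qed

lemma norm_increment_linearization_le:
  fixes g :: "real \<Rightarrow> 'b::real_normed_vector"
  assumes g': "\<And>s. s \<in> closed_segment 0 t \<Longrightarrow> (g has_vector_derivative g' s) (at s)"
    and bound: "\<And>s. s \<in> closed_segment 0 t \<Longrightarrow> norm (g' s - A) \<le> e"
  shows "norm (g t - g 0 - t *\<^sub>R A) \<le> \<bar>t\<bar> * e"
proof -
  have "norm ((g t - t *\<^sub>R A) - (g 0 - 0 *\<^sub>R A)) \<le> e * norm (t - 0)"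
  proof (rule differentiable_bound[where f = "\<lambda>s. g s - s *\<^sub>R A" and f' = "\<lambda>s u. u *\<^sub>R (g' s - A)"])
    fix s assume s: "s \<in> closed_segment 0 t"
    have "((\<lambda>s. s *\<^sub>R A) has_vector_derivative A) (at s)"
      by (auto simp: has_vector_derivative_def intro!: derivative_eq_intros)
    then have "((\<lambda>s. g s - s *\<^sub>R A) has_vector_derivative g' s - A) (at s)"
      by (intro derivative_intros g'[OF s])
    then show "((\<lambda>s. g s - s *\<^sub>R A) has_derivative (\<lambda>u. u *\<^sub>R (g' s - A))) (at s within closed_segment 0 t)"
      by (simp add: has_vector_derivative_def has_derivative_at_withinI)
    show "onorm (\<lambda>u. u *\<^sub>R (g' s - A)) \<le> e"
      using bound[OF s] by (intro onorm_le) (simp add: mult.commute[of e] mult_left_mono)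
  qed auto
  then show ?thesis by (simp add: algebra_simps)
qed

lemma second_difference_approx:
  fixes f :: "real^'n::finite \<Rightarrow> 'b::real_normed_vector"
  assumes f: "smooth_fun f" and "0 < \<tau>"
    and A: "\<And>p. dist p z \<le> 2 * \<tau> \<Longrightarrow> norm (dpart j (dpart i f) p - A) \<le> e"
  shows "norm (f (z + \<tau> *\<^sub>R axis i 1 + \<tau> *\<^sub>R axis j 1) - f (z + \<tau> *\<^sub>R axis i 1)
              - f (z + \<tau> *\<^sub>R axis j 1) + f z - (\<tau> * \<tau>) *\<^sub>R A) \<le> \<tau> * (\<tau> * e)"
proof -
  define \<phi> where "\<phi> s = f (z + s *\<^sub>R axis i 1 + \<tau> *\<^sub>R axis j 1) - f (z + s *\<^sub>R axis i 1)" for s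
  define \<phi>' where "\<phi>' s = dpart i f (z + s *\<^sub>R axis i 1 + \<tau> *\<^sub>R axis j 1) - dpart i f (z + s *\<^sub>R axis i 1)" for s
  have "(\<phi> has_vector_derivative \<phi>' s) (at s)" for s
  proof -
    have "((\<lambda>s. f ((z + \<tau> *\<^sub>R axis j 1) + s *\<^sub>R axis i 1) - f (z + s *\<^sub>R axis i 1)) has_vector_derivative
        dpart i f ((z + \<tau> *\<^sub>R axis j 1) + s *\<^sub>R axis i 1) - dpart i f (z + s *\<^sub>R axis i 1)) (at s)"
      by (intro derivative_intros smooth_fun_has_vector_derivative f)
    then show ?thesis unfolding \<phi>_def \<phi>'_def by (simp add: ac_simps)
  qed
  moreover have "norm (\<phi>' s - \<tau> *\<^sub>R A) \<le> \<tau> * e" if s: "s \<in> closed_segment 0 \<tau>" for s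
  proof -
    have "norm (dpart i f (z + s *\<^sub>R axis i 1 + \<tau> *\<^sub>R axis j 1) - dpart i f (z + s *\<^sub>R axis i 1 + 0 *\<^sub>R axis j 1)
               - \<tau> *\<^sub>R A) \<le> \<bar>\<tau>\<bar> * e"
    proof (rule norm_increment_linearization_le)
      fix t assume t: "t \<in> closed_segment 0 \<tau>"
      show "((\<lambda>t. dpart i f (z + s *\<^sub>R axis i 1 + t *\<^sub>R axis j 1)) has_vector_derivative
          dpart j (dpart i f) (z + s *\<^sub>R axis i 1 + t *\<^sub>R axis j 1)) (at t)"
        using smooth_fun_has_vector_derivative[OF smooth_fun_diter[OF f, of "[i]"]] by simp
      have "dist (z + s *\<^sub>R axis i 1 + t *\<^sub>R axis j 1) z \<le> \<bar>s\<bar> + \<bar>t\<bar>"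
        by (simp add: dist_norm norm_triangle_le)
      also have "\<dots> \<le> 2 * \<tau>"
        using s t \<open>0 < \<tau>\<close> by (simp add: closed_segment_eq_real_ivl)
      finally show "norm (dpart j (dpart i f) (z + s *\<^sub>R axis i 1 + t *\<^sub>R axis j 1) - A) \<le> e"
        by (rule A)
    qed
    then show ?thesis using \<open>0 < \<tau>\<close> by (simp add: \<phi>'_def)
  qed
  ultimately have "norm (\<phi> \<tau> - \<phi> 0 - \<tau> *\<^sub>R (\<tau> *\<^sub>R A)) \<le> \<bar>\<tau>\<bar> * (\<tau> * e)"
    by (intro norm_increment_linearization_le)
  then show ?thesis
    using \<open>0 < \<tau>\<close> by (simp add: \<phi>_def algebra_simps)
qed

lemma eventually_second_difference_approx:
  fixes f :: "real^'n::finite \<Rightarrow> 'b::real_normed_vector"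
  assumes f: "smooth_fun f" and "0 < e"
  shows "\<forall>\<^sub>F \<tau> in at_right 0. norm (f (z + \<tau> *\<^sub>R axis i 1 + \<tau> *\<^sub>R axis j 1) - f (z + \<tau> *\<^sub>R axis i 1)
           - f (z + \<tau> *\<^sub>R axis j 1) + f z - (\<tau> * \<tau>) *\<^sub>R dpart j (dpart i f) z) \<le> \<tau> * (\<tau> * e)"
proof -
  obtain \<delta> where "0 < \<delta>"
    and \<delta>: "\<And>p. dist p z < \<delta> \<Longrightarrow> norm (dpart j (dpart i f) p - dpart j (dpart i f) z) \<le> e"
    using smooth_fun_continuous_on[OF f, of "[j, i]"] \<open>0 < e\<close>
    unfolding continuous_on_iff dist_norm by (metis UNIV_I diter.simps less_imp_le)
  have "\<forall>\<^sub>F \<tau> in at_right 0. 0 < \<tau> \<and> 2 * \<tau> < \<delta>"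
    unfolding eventually_at_right_field using \<open>0 < \<delta>\<close> by (intro exI[of _ "\<delta> / 2"]) auto
  then show ?thesis
    by (rule eventually_mono) (auto intro!: second_difference_approx[OF f] \<delta>)
qed

(* Schwarz: both mixed partials at z are limits of the second difference divided by tau^2. *)
lemma dpart_commute:
  fixes f :: "real^'n::finite \<Rightarrow> 'b::real_normed_vector"
  assumes f: "smooth_fun f"
  shows "dpart i (dpart j f) = dpart j (dpart i f)"
proof
  fix z
  define \<Delta> where "\<Delta> \<tau> = f (z + \<tau> *\<^sub>R axis i 1 + \<tau> *\<^sub>R axis j 1) - f (z + \<tau> *\<^sub>R axis i 1)
                          - f (z + \<tau> *\<^sub>R axis j 1) + f z" for \<tau>
  have \<Delta>_swap: "\<Delta> \<tau> = f (z + \<tau> *\<^sub>R axis j 1 + \<tau> *\<^sub>R axis i 1) - f (z + \<tau> *\<^sub>R axis j 1)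
                          - f (z + \<tau> *\<^sub>R axis i 1) + f z" for \<tau>
    unfolding \<Delta>_def by (simp add: algebra_simps)
  let ?A = "dpart j (dpart i f) z" and ?B = "dpart i (dpart j f) z"
  have "norm (?B - ?A) \<le> 0 + e" if "0 < e" for e
  proof -
    have "\<forall>\<^sub>F \<tau> in at_right 0. 0 < \<tau> \<and> norm (\<Delta> \<tau> - (\<tau> * \<tau>) *\<^sub>R ?A) \<le> \<tau> * (\<tau> * (e / 2))
                                   \<and> norm (\<Delta> \<tau> - (\<tau> * \<tau>) *\<^sub>R ?B) \<le> \<tau> * (\<tau> * (e / 2))"
      using eventually_at_right_less[of 0]
        eventually_second_difference_approx[OF f half_gt_zero[OF \<open>0 < e\<close>], where z = z and i = i and j = j]
        eventually_second_difference_approx[OF f half_gt_zero[OF \<open>0 < e\<close>], where z = z and i = j and j = i]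
      unfolding \<Delta>_def[symmetric] \<Delta>_swap[symmetric] by eventually_elim simp
    then obtain \<tau> where "0 < \<tau>" and approx:
        "norm (\<Delta> \<tau> - (\<tau> * \<tau>) *\<^sub>R ?A) \<le> \<tau> * (\<tau> * (e / 2))"
        "norm (\<Delta> \<tau> - (\<tau> * \<tau>) *\<^sub>R ?B) \<le> \<tau> * (\<tau> * (e / 2))"
      using eventually_happens'[OF trivial_limit_at_right_real] by blast
    have "(\<tau> * \<tau>) * norm (?B - ?A) = norm ((\<Delta> \<tau> - (\<tau> * \<tau>) *\<^sub>R ?A) - (\<Delta> \<tau> - (\<tau> * \<tau>) *\<^sub>R ?B))"
      using \<open>0 < \<tau>\<close> by (simp add: algebra_simps flip: scaleR_diff_right)
    also have "\<dots> \<le> (\<tau> * \<tau>) * e"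
      using norm_triangle_ineq4[of "\<Delta> \<tau> - (\<tau> * \<tau>) *\<^sub>R ?A" "\<Delta> \<tau> - (\<tau> * \<tau>) *\<^sub>R ?B"] approx
      by (simp add: algebra_simps)
    finally show ?thesis using \<open>0 < \<tau>\<close> by simp
  qed
  then show "?B = ?A"
    using field_le_epsilon[of "norm (?B - ?A)" 0] by simp
qed

lemma diter_snoc:
  fixes f :: "real^'n::finite \<Rightarrow> 'b::real_normed_vector"
  assumes "smooth_fun f"
  shows "diter (ds @ [i]) f = diter (i # ds) f"
proof (induction ds)
  case (Cons j ds)
  then show ?case
    using dpart_commute[OF smooth_fun_diter[OF assms, of ds], of j i] by simp
qed simp

lemma dpart_diter_commute:
  fixes f :: "real^'n::finite \<Rightarrow> 'b::real_normed_vector"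
  assumes "smooth_fun f"
  shows "dpart i (diter ds f) = diter ds (dpart i f)"
  using diter_snoc[OF assms, of ds i] by (simp add: diter_append)

lemma diter_mset_eq:
  fixes f :: "real^'n::finite \<Rightarrow> 'b::real_normed_vector"
  assumes f: "smooth_fun f"
  shows "mset ds = mset es \<Longrightarrow> diter ds f = diter es f"
proof (induction ds arbitrary: es)
  case (Cons i ds)
  then have "i \<in> set es" by (metis list.set_intros(1) set_mset_mset)
  then obtain es1 es2 where es: "es = es1 @ i # es2" by (meson split_list)
  have "diter es f = diter (es1 @ [i]) (diter es2 f)"
    unfolding es by (simp flip: diter_append)
  also have "\<dots> = dpart i (diter (es1 @ es2) f)"
    using diter_snoc[OF smooth_fun_diter[OF f, of es2], of es1 i] by (simp add: diter_append)
  also have "diter (es1 @ es2) f = diter ds f"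
    using Cons.IH[of "es1 @ es2"] Cons.prems es by simp
  finally show ?case by simp
qed simp

lemma multi_index_list_exists: "\<exists>ds. \<forall>i. count_list ds i = (mu :: 'n::finite \<Rightarrow> nat) i"
proof -
  obtain ds where "mset ds = Abs_multiset mu" using ex_mset by blast
  then have "count (mset ds) = mu" by (simp add: count_Abs_multiset)
  then show ?thesis by (metis count_mset)
qed

lemma count_list_dmulti_list:
  "count_list (SOME ds. \<forall>i. count_list ds i = mu i) i = (mu :: 'n::finite \<Rightarrow> nat) i"
  using someI_ex[OF multi_index_list_exists[of mu]] by blast

lemma length_eq_mi_abs: "(\<And>i. count_list ds i = mu i) \<Longrightarrow> length ds = mi_abs (mu :: 'n::finite \<Rightarrow> nat)"
  unfolding mi_abs_def using sum_count_set[of ds UNIV] by simp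

lemma dmulti_eq_diter:
  fixes f :: "real^'n::finite \<Rightarrow> 'b::real_normed_vector"
  assumes "smooth_fun f" "\<And>i. count_list ds i = mu i"
  shows "dmulti mu f = diter ds f"
  unfolding dmulti_def
  using assms count_list_dmulti_list[of mu]
  by (intro diter_mset_eq) (simp_all add: multiset_eq_iff count_mset)

section \<open>The spaces K(M) and their duals\<close>

lemma in_K_iff_diter_bounded:
  fixes F :: "'g \<Rightarrow> real^'n::finite \<Rightarrow> real" and f :: "real^'n \<Rightarrow> complex"
  shows "in_K F f \<longleftrightarrow> smooth_fun f \<and>
     (\<forall>g m. \<exists>B. \<forall>ds x. length ds \<le> m \<longrightarrow> F g x * norm (diter ds f x) \<le> B)"
proof
  assume f: "in_K F f"
  then have "smooth_fun f" by (simp add: in_K_def)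
  moreover have "\<exists>B. \<forall>ds x. length ds \<le> m \<longrightarrow> F g x * norm (diter ds f x) \<le> B" for g m
  proof -
    obtain B where B: "\<And>x mu. mi_abs mu \<le> m \<Longrightarrow> F g x * norm (dmulti mu f x) \<le> B"
      using f unfolding in_K_def bdd_above_def by blast
    have "F g x * norm (diter ds f x) \<le> B" if "length ds \<le> m" for ds x
      using B[of "count_list ds" x] that length_eq_mi_abs[of ds "count_list ds"]
        dmulti_eq_diter[OF \<open>smooth_fun f\<close>, of ds "count_list ds"] by simp
    then show ?thesis by blast
  qed
  ultimately show "smooth_fun f \<and> (\<forall>g m. \<exists>B. \<forall>ds x. length ds \<le> m \<longrightarrow> F g x * norm (diter ds f x) \<le> B)"
    by blast
next
  assume f: "smooth_fun f \<and> (\<forall>g m. \<exists>B. \<forall>ds x. length ds \<le> m \<longrightarrow> F g x * norm (diter ds f x) \<le> B)"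
  have "bdd_above {F g x * norm (dmulti mu f x) | x mu. mi_abs mu \<le> m}" for g m
  proof -
    obtain B where B: "\<And>ds x. length ds \<le> m \<Longrightarrow> F g x * norm (diter ds f x) \<le> B"
      using f by blast
    have "length (SOME ds. \<forall>i. count_list ds i = mu i) = mi_abs mu" for mu :: "'n \<Rightarrow> nat"
      by (rule length_eq_mi_abs) (rule count_list_dmulti_list)
    then show ?thesis
      by (intro bdd_aboveI[of _ B]) (auto simp: dmulti_def intro!: B)
  qed
  then show "in_K F f" using f by (simp add: in_K_def)
qed

lemma seminorm_K_le:
  fixes F :: "'g \<Rightarrow> real^'n::finite \<Rightarrow> real" and f :: "real^'n \<Rightarrow> complex"
  assumes "\<And>ds x. length ds \<le> m \<Longrightarrow> F g x * norm (diter ds f x) \<le> e"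
  shows "seminorm_K F g m f \<le> e"
  unfolding seminorm_K_def
proof (rule cSup_least)
  have "mi_abs (\<lambda>_::'n. 0) \<le> m" by (simp add: mi_abs_def)
  then show "{F g x * norm (dmulti mu f x) | x mu. mi_abs mu \<le> m} \<noteq> {}"
    by blast
  have "length (SOME ds. \<forall>i. count_list ds i = mu i) = mi_abs mu" for mu :: "'n \<Rightarrow> nat"
    by (rule length_eq_mi_abs) (rule count_list_dmulti_list)
  then show "y \<le> e" if "y \<in> {F g x * norm (dmulti mu f x) | x mu. mi_abs mu \<le> m}" for y
    using that by (auto simp: dmulti_def intro!: assms)
qed

lemma seminorm_K_nonneg:
  fixes F :: "'g \<Rightarrow> real^'n::finite \<Rightarrow> real" and f :: "real^'n \<Rightarrow> complex"
  assumes "in_K F f" and "0 \<le> F g x"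
  shows "0 \<le> seminorm_K F g m f"
proof -
  have "mi_abs (\<lambda>_::'n. 0) \<le> m" by (simp add: mi_abs_def)
  then have "F g x * norm (dmulti (\<lambda>_. 0) f x) \<in> {F g x * norm (dmulti mu f x) | x mu. mi_abs mu \<le> m}"
    by blast
  then have "F g x * norm (dmulti (\<lambda>_. 0) f x) \<le> seminorm_K F g m f"
    using assms(1) unfolding seminorm_K_def in_K_def by (blast intro: cSup_upper)
  then show ?thesis using assms(2) by (meson mult_nonneg_nonneg norm_ge_zero order_trans)
qed

lemma mult_seminorm_K_le:
  fixes F :: "'g \<Rightarrow> real^'n::finite \<Rightarrow> real" and f :: "real^'n \<Rightarrow> complex"
  assumes "0 \<le> c" "0 \<le> e"
    and bound: "\<And>ds x. length ds \<le> m \<Longrightarrow> c * (F g x * norm (diter ds f x)) \<le> e"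
  shows "c * seminorm_K F g m f \<le> e"
proof (cases "c = 0")
  case False
  then have "0 < c" using \<open>0 \<le> c\<close> by simp
  have "seminorm_K F g m f \<le> e / c"
    using bound \<open>0 < c\<close> by (intro seminorm_K_le) (simp add: pos_le_divide_eq mult.commute)
  then show ?thesis using \<open>0 < c\<close> by (simp add: pos_le_divide_eq mult.commute)
qed (use assms in simp)

lemma in_K_diter:
  assumes "in_K F f"
  shows "in_K F (diter ds f)"
  unfolding in_K_iff_diter_bounded
proof (intro conjI allI)
  show "smooth_fun (diter ds f)"
    using assms smooth_fun_diter by (auto simp: in_K_def)
  fix g m
  obtain B where B: "\<And>es x. length es \<le> m + length ds \<Longrightarrow> F g x * norm (diter es f x) \<le> B"
    using assms unfolding in_K_iff_diter_bounded by blast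
  show "\<exists>B. \<forall>es x. length es \<le> m \<longrightarrow> F g x * norm (diter es (diter ds f) x) \<le> B"
    using B[of "_ @ ds"] by (auto simp: diter_append)
qed

lemma dpart_lincomb:
  fixes f g :: "real^'n::finite \<Rightarrow> complex"
  assumes "smooth_fun f" "smooth_fun g"
  shows "dpart i (\<lambda>y. f y + c * g y) = (\<lambda>y. dpart i f y + c * dpart i g y)"
proof
  fix z
  have "((\<lambda>t. f (z + t *\<^sub>R axis i 1) + c * g (z + t *\<^sub>R axis i 1)) has_vector_derivative
      dpart i f (z + 0 *\<^sub>R axis i 1) + c * dpart i g (z + 0 *\<^sub>R axis i 1)) (at 0)"
    by (intro derivative_intros smooth_fun_has_vector_derivative assms)
  then show "dpart i (\<lambda>y. f y + c * g y) z = dpart i f z + c * dpart i g z"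
    unfolding dpart_def[of i "\<lambda>y. f y + c * g y"] by (simp add: vector_derivative_at)
qed

lemma diter_lincomb:
  fixes f g :: "real^'n::finite \<Rightarrow> complex"
  assumes "smooth_fun f" "smooth_fun g"
  shows "diter ds (\<lambda>y. f y + c * g y) = (\<lambda>y. diter ds f y + c * diter ds g y)"
  by (induction ds) (simp_all add: dpart_lincomb smooth_fun_diter assms)

lemma smooth_fun_lincomb:
  fixes f g :: "real^'n::finite \<Rightarrow> complex"
  assumes "smooth_fun f" "smooth_fun g"
  shows "smooth_fun (\<lambda>y. f y + c * g y)"
  unfolding smooth_fun_def diter_lincomb[OF assms]
proof (intro allI conjI)
  fix ds
  show "continuous_on UNIV (\<lambda>y. diter ds f y + c * diter ds g y)"
    by (intro continuous_intros smooth_fun_continuous_on assms)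
  fix i x
  have "((\<lambda>t. diter ds f (x + t *\<^sub>R axis i 1) + c * diter ds g (x + t *\<^sub>R axis i 1)) has_vector_derivative
      dpart i (diter ds f) (x + 0 *\<^sub>R axis i 1) + c * dpart i (diter ds g) (x + 0 *\<^sub>R axis i 1)) (at 0)"
    by (intro derivative_intros smooth_fun_has_vector_derivative smooth_fun_diter assms)
  then show "(\<lambda>t. diter ds f (x + t *\<^sub>R axis i 1) + c * diter ds g (x + t *\<^sub>R axis i 1)) differentiable (at 0)"
    using differentiableI_vector by blast
qed

lemma in_K_lincomb:
  fixes f g :: "real^'n::finite \<Rightarrow> complex"
  assumes F: "\<And>w x. 0 \<le> F w x" and f: "in_K F f" and g: "in_K F g"
  shows "in_K F (\<lambda>y. f y + c * g y)"
  unfolding in_K_iff_diter_bounded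
proof (intro conjI allI)
  have sf: "smooth_fun f" and sg: "smooth_fun g" using f g by (auto simp: in_K_def)
  then show "smooth_fun (\<lambda>y. f y + c * g y)" by (rule smooth_fun_lincomb)
  fix w m
  obtain Bf where Bf: "\<And>ds x. length ds \<le> m \<Longrightarrow> F w x * norm (diter ds f x) \<le> Bf"
    using f unfolding in_K_iff_diter_bounded by blast
  obtain Bg where Bg: "\<And>ds x. length ds \<le> m \<Longrightarrow> F w x * norm (diter ds g x) \<le> Bg"
    using g unfolding in_K_iff_diter_bounded by blast
  have "F w x * norm (diter ds (\<lambda>y. f y + c * g y) x) \<le> Bf + norm c * Bg" if "length ds \<le> m" for ds x
  proof -
    have "F w x * norm (diter ds (\<lambda>y. f y + c * g y) x)
        \<le> F w x * (norm (diter ds f x) + norm c * norm (diter ds g x))"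
      unfolding diter_lincomb[OF sf sg]
      by (intro mult_left_mono F) (metis norm_triangle_ineq norm_mult)
    also have "\<dots> = F w x * norm (diter ds f x) + norm c * (F w x * norm (diter ds g x))"
      by (simp add: algebra_simps)
    also have "\<dots> \<le> Bf + norm c * Bg"
      using Bf[OF that] Bg[OF that] by (intro add_mono mult_left_mono) auto
    finally show ?thesis .
  qed
  then show "\<exists>B. \<forall>ds x. length ds \<le> m \<longrightarrow> F w x * norm (diter ds (\<lambda>y. f y + c * g y) x) \<le> B"
    by blast
qed

lemma diter_zero: "diter ds (\<lambda>y. 0::complex) = (\<lambda>y. 0)"
  by (induction ds) (simp_all add: dpart_def)

lemma in_K_zero: "in_K F (\<lambda>y. 0::complex)"
  unfolding in_K_iff_diter_bounded by (auto simp: smooth_fun_def diter_zero intro!: exI[of _ 0])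

lemma in_K_scale:
  fixes f :: "real^'n::finite \<Rightarrow> complex"
  assumes "\<And>w x. 0 \<le> F w x" and "in_K F f"
  shows "in_K F (\<lambda>y. c * f y)"
  using in_K_lincomb[OF assms(1) in_K_zero assms(2)] by simp

lemma diter_scale:
  fixes f :: "real^'n::finite \<Rightarrow> complex"
  assumes "smooth_fun f"
  shows "diter ds (\<lambda>y. c * f y) = (\<lambda>y. c * diter ds f y)"
  using diter_lincomb[of "\<lambda>y. 0" f ds c] assms by (simp add: diter_zero smooth_fun_def)

lemma K_dual_lincomb:
  fixes f g :: "real^'n::finite \<Rightarrow> complex"
  assumes "\<And>w x. 0 \<le> N w x" and v: "in_K_dual N v" and f: "in_K N f" and g: "in_K N g"
  shows "v (\<lambda>y. f y + c * g y) = v f + c * v g"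
proof -
  have "v (\<lambda>y. f y + (\<lambda>y. c * g y) y) = v f + v (\<lambda>y. c * g y)"
    using v f in_K_scale[OF assms(1) g] unfolding in_K_dual_def by blast
  also have "v (\<lambda>y. c * g y) = c * v g" using v g unfolding in_K_dual_def by blast
  finally show ?thesis by simp
qed

lemma K_dual_bound:
  assumes "in_K_dual N v"
  obtains W C where "finite W" and "0 \<le> C"
    and "\<And>f. in_K N f \<Longrightarrow> norm (v f) \<le> C * (\<Sum>(w, m)\<in>W. seminorm_K N w m f)"
proof -
  have "\<exists>W C. finite W \<and> C \<ge> 0 \<and> (\<forall>f. in_K N f \<longrightarrow> norm (v f) \<le> C * (\<Sum>(w, m)\<in>W. seminorm_K N w m f))"
    using assms unfolding in_K_dual_def by (elim conjE)
  then show ?thesis using that by blast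
qed

lemma K_dual_scale: "in_K_dual N v \<Longrightarrow> in_K N f \<Longrightarrow> v (\<lambda>y. c * f y) = c * v f"
  by (simp add: in_K_dual_def)

lemma K_dual_tendsto_zero:
  assumes N: "\<And>w x. 0 \<le> N w x" and v: "in_K_dual N v" and f: "\<And>t. in_K N (f t)"
    and small: "\<And>w m e. 0 < e \<Longrightarrow> eventually (\<lambda>t. seminorm_K N w m (f t) \<le> e) F"
  shows "((\<lambda>t. v (f t)) \<longlongrightarrow> 0) F"
proof -
  obtain W C where bound: "\<And>g. in_K N g \<Longrightarrow> norm (v g) \<le> C * (\<Sum>(w, m)\<in>W. seminorm_K N w m g)"
    using K_dual_bound[OF v] by metis
  have "((\<lambda>t. seminorm_K N w m (f t)) \<longlongrightarrow> 0) F" for w m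
  proof (rule tendstoI)
    fix e :: real assume "0 < e"
    then have "eventually (\<lambda>t. seminorm_K N w m (f t) \<le> e / 2) F" by (intro small) simp
    moreover have "0 \<le> seminorm_K N w m (f t)" for t
      using seminorm_K_nonneg[OF f N] .
    ultimately show "eventually (\<lambda>t. dist (seminorm_K N w m (f t)) 0 < e) F"
      using \<open>0 < e\<close> by (elim eventually_mono) simp
  qed
  then have lim: "((\<lambda>t. C * (\<Sum>(w, m)\<in>W. seminorm_K N w m (f t))) \<longlongrightarrow> 0) F"
    unfolding case_prod_beta by (intro tendsto_mult_right_zero tendsto_null_sum)
  have le: "\<forall>t. norm (v (f t)) \<le> C * (\<Sum>(w, m)\<in>W. seminorm_K N w m (f t))"
    using bound f by blast
  show ?thesis
    using Lim_null_comparison[OF always_eventually[OF le] lim] .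
qed

lemma defining_family_nonneg: "defining_family M \<Longrightarrow> 0 \<le> M g x"
  by (simp add: defining_family_def)

lemma defining_family_bounded_image: "defining_family M \<Longrightarrow> bounded S \<Longrightarrow> bounded (M g ` S)"
  by (simp add: defining_family_def)

lemma defining_family_locally_positive:
  assumes "defining_family M"
  obtains g U C where "open U" "x \<in> U" "0 < C" "\<And>x'. x' \<in> U \<Longrightarrow> C \<le> M g x'"
  using assms unfolding defining_family_def by metis

(* The only consequence of hypothesis (I) that is used. *)
definition dominated_at_infinity :: "('w \<Rightarrow> real^'n::finite \<Rightarrow> real) \<Rightarrow> bool" where
  "dominated_at_infinity N \<longleftrightarrow>
     (\<forall>w. \<exists>w'. \<forall>e>0. \<forall>\<^sub>F y in at_infinity. N w y \<le> e * N w' y)"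

lemma dominated_at_infinityI:
  fixes N :: "'w \<Rightarrow> real^'n::finite \<Rightarrow> real"
  assumes N: "\<And>w y. 0 \<le> N w y"
    and L: "\<forall>w. \<exists>w' L. (\<forall>y. 0 \<le> L y) \<and> (\<forall>y. N w y \<le> L y * N w' y) \<and> (L \<longlongrightarrow> 0) at_infinity"
  shows "dominated_at_infinity N"
  unfolding dominated_at_infinity_def
proof
  fix w
  obtain w' L where "\<And>y. N w y \<le> L y * N w' y" and "(L \<longlongrightarrow> 0) at_infinity"
    using L by blast
  have "\<forall>\<^sub>F y in at_infinity. N w y \<le> e * N w' y" if "0 < e" for e
    using order_tendstoD(2)[OF \<open>(L \<longlongrightarrow> 0) at_infinity\<close> that]
  proof (rule eventually_mono)
    fix y assume "L y < e"
    then show "N w y \<le> e * N w' y"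
      using \<open>N w y \<le> L y * N w' y\<close> N[of w' y] by (meson less_imp_le mult_right_mono order_trans)
  qed
  then show "\<exists>w'. \<forall>e>0. \<forall>\<^sub>F y in at_infinity. N w y \<le> e * N w' y" by blast
qed

section \<open>Slices of functions on R^(k1+k2)\<close>

definition slice :: "(real^('a::finite + 'b::finite) \<Rightarrow> 'c) \<Rightarrow> real^'a \<Rightarrow> real^'b \<Rightarrow> 'c" where
  "slice G x = (\<lambda>y. G (vjoin x y))"

lemma vjoin_add_axis_Inl: "vjoin (x + t *\<^sub>R axis i 1) y = vjoin x y + t *\<^sub>R axis (Inl i) (1::real)"
  by (simp add: vec_eq_iff vjoin_def axis_def split: sum.split)

lemma vjoin_add_axis_Inr: "vjoin x (y + t *\<^sub>R axis i 1) = vjoin x y + t *\<^sub>R axis (Inr i) (1::real)"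
  by (simp add: vec_eq_iff vjoin_def axis_def split: sum.split)

lemma continuous_on_vjoin: "continuous_on S (\<lambda>p. vjoin (fst p) (snd p))"
proof -
  have "linear (\<lambda>p::(real^'a::finite) \<times> (real^'b::finite). vjoin (fst p) (snd p))"
    by (rule linearI) (simp_all add: vec_eq_iff vjoin_def split: sum.split)
  then show ?thesis by (rule linear_continuous_on[OF linear_conv_bounded_linear[THEN iffD1]])
qed

lemma tensor_family_vjoin: "tensor_family M N (g, w) (vjoin x y) = M g x * N w y"
  by (simp add: tensor_family_def vfst_def vsnd_def vjoin_def)

lemma diter_slice: "diter ds (slice G x) = slice (diter (map Inr ds) G) x"
  by (induction ds) (simp_all add: slice_def dpart_def vjoin_add_axis_Inr)

lemma smooth_fun_slice:
  fixes G :: "real^('a::finite + 'b::finite) \<Rightarrow> 'c::real_normed_vector"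
  assumes "smooth_fun G"
  shows "smooth_fun (slice G x)"
  unfolding smooth_fun_def diter_slice
proof (intro allI conjI)
  fix ds :: "'b list"
  have "continuous_on UNIV ((\<lambda>p. vjoin (fst p) (snd p) :: real^('a + 'b)) \<circ> (\<lambda>y. (x, y)))"
    by (intro continuous_on_compose continuous_intros continuous_on_vjoin)
  then have "continuous_on UNIV (\<lambda>y. vjoin x y :: real^('a + 'b))"
    by (simp add: o_def)
  then show "continuous_on UNIV (slice (diter (map Inr ds) G) x)"
    unfolding slice_def
    by (rule continuous_on_compose2[OF smooth_fun_continuous_on[OF assms]]) auto
  fix i y
  have "(\<lambda>t. diter (map Inr ds) G (vjoin x y + t *\<^sub>R axis (Inr i) 1)) differentiable (at 0)"
    using assms unfolding smooth_fun_def by blast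
  then show "(\<lambda>t. slice (diter (map Inr ds) G) x (y + t *\<^sub>R axis i 1)) differentiable (at 0)"
    by (simp add: slice_def vjoin_add_axis_Inr)
qed

lemma in_K_tensor_bound:
  assumes "in_K (tensor_family M N) G"
  obtains B where "\<And>ds x y. length ds \<le> m \<Longrightarrow> M g x * N w y * norm (diter ds G (vjoin x y)) \<le> B"
  using assms unfolding in_K_iff_diter_bounded by (metis tensor_family_vjoin)

lemma in_K_slice:
  assumes M: "defining_family M" and N: "\<And>w y. 0 \<le> N w y"
    and G: "in_K (tensor_family M N) G"
  shows "in_K N (slice G x)"
  unfolding in_K_iff_diter_bounded
proof (intro conjI allI)
  show "smooth_fun (slice G x)"
    using G smooth_fun_slice by (auto simp: in_K_def)
  obtain g U C where "x \<in> U" "0 < C" and C: "\<And>x'. x' \<in> U \<Longrightarrow> C \<le> M g x'"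
    using defining_family_locally_positive[OF M] by metis
  fix w m
  obtain B where B: "\<And>ds x y. length ds \<le> m \<Longrightarrow> M g x * N w y * norm (diter ds G (vjoin x y)) \<le> B"
    using in_K_tensor_bound[OF G] by metis
  have "N w y * norm (diter ds (slice G x) y) \<le> B / C" if "length ds \<le> m" for ds y
  proof -
    have "C * (N w y * norm (diter ds (slice G x) y)) \<le> M g x * (N w y * norm (diter (map Inr ds) G (vjoin x y)))"
      unfolding diter_slice by (simp add: slice_def N mult_right_mono C \<open>x \<in> U\<close>)
    also have "\<dots> \<le> B" using B that by (simp add: mult.assoc)
    finally show ?thesis using \<open>0 < C\<close> by (simp add: pos_le_divide_eq mult.commute)
  qed
  then show "\<exists>B. \<forall>ds y. length ds \<le> m \<longrightarrow> N w y * norm (diter ds (slice G x) y) \<le> B"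
    by blast
qed

lemma eventually_uniformly_close_on_compact:
  fixes f :: "'a::heine_borel \<Rightarrow> 'b::metric_space \<Rightarrow> 'c::metric_space"
  assumes f: "continuous_on UNIV (\<lambda>p. f (fst p) (snd p))" and K: "compact K" and "0 < e"
  shows "\<forall>\<^sub>F x' in nhds x. \<forall>y\<in>K. dist (f x' y) (f x y) < e"
proof -
  have "uniformly_continuous_on (cball x 1 \<times> K) (\<lambda>p. f (fst p) (snd p))"
    by (intro compact_uniformly_continuous continuous_on_subset[OF f] compact_Times compact_cball K) simp
  then obtain d where "0 < d"
    and d: "\<And>p p'. p \<in> cball x 1 \<times> K \<Longrightarrow> p' \<in> cball x 1 \<times> K \<Longrightarrow> dist p' p < d \<Longrightarrow>
              dist (f (fst p') (snd p')) (f (fst p) (snd p)) < e"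
    unfolding uniformly_continuous_on_def using \<open>0 < e\<close> by metis
  have "\<forall>y\<in>K. dist (f x' y) (f x y) < e" if "dist x' x < min d 1" for x'
    using that d[of "(x, _)" "(x', _)"] by (auto simp: dist_Pair_Pair dist_commute)
  then show ?thesis
    unfolding eventually_nhds_metric using \<open>0 < d\<close> by (metis zero_less_one min_less_iff_conj)
qed

lemma weighted_slice_increment_le:
  fixes \<Phi> :: "real^('a::finite + 'b::finite) \<Rightarrow> complex"
  assumes \<Phi>: "smooth_fun \<Phi>" and "0 \<le> c"
    and bound: "\<And>s. s \<in> closed_segment 0 t \<Longrightarrow>
      c * norm (dpart (Inl i) \<Phi> (vjoin (x + s *\<^sub>R axis i 1) y) - dpart (Inl i) \<Phi> (vjoin x y)) \<le> e"
  shows "c * norm (\<Phi> (vjoin (x + t *\<^sub>R axis i 1) y) - \<Phi> (vjoin x y) - t *\<^sub>R dpart (Inl i) \<Phi> (vjoin x y))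
           \<le> \<bar>t\<bar> * e"
proof (cases "c = 0")
  case True
  then show ?thesis using bound[of 0] by simp
next
  case False
  then have "0 < c" using \<open>0 \<le> c\<close> by simp
  have "norm (\<Phi> (vjoin (x + t *\<^sub>R axis i 1) y) - \<Phi> (vjoin (x + 0 *\<^sub>R axis i 1) y)
              - t *\<^sub>R dpart (Inl i) \<Phi> (vjoin x y)) \<le> \<bar>t\<bar> * (e / c)"
  proof (rule norm_increment_linearization_le)
    fix s
    show "((\<lambda>s. \<Phi> (vjoin (x + s *\<^sub>R axis i 1) y)) has_vector_derivative
            dpart (Inl i) \<Phi> (vjoin (x + s *\<^sub>R axis i 1) y)) (at s)"
      unfolding vjoin_add_axis_Inl by (rule smooth_fun_has_vector_derivative[OF \<Phi>])
    assume "s \<in> closed_segment 0 t"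
    then show "norm (dpart (Inl i) \<Phi> (vjoin (x + s *\<^sub>R axis i 1) y) - dpart (Inl i) \<Phi> (vjoin x y)) \<le> e / c"
      using bound \<open>0 < c\<close> by (simp add: pos_le_divide_eq mult.commute)
  qed
  then show ?thesis using \<open>0 < c\<close> by (simp add: pos_le_divide_eq mult.commute mult.left_commute)
qed

(* (G(x + t e_i, .) - G(x, .)) / t - d_(x_i) G(x, .), written with combinations f + c g, the form
   in which linearity of K(N) and of its dual is available. *)
definition slice_remainder ::
    "(real^('a::finite + 'b::finite) \<Rightarrow> complex) \<Rightarrow> real^'a \<Rightarrow> 'a \<Rightarrow> real \<Rightarrow> real^'b \<Rightarrow> complex" where
  "slice_remainder G x i t = (\<lambda>y. (1 / of_real t) *
     ((slice G (x + t *\<^sub>R axis i 1) y + (-1) * slice G x y) + (- of_real t) * slice (dpart (Inl i) G) x y))"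

lemma diter_slice_remainder:
  fixes G :: "real^('a::finite + 'b::finite) \<Rightarrow> complex"
  assumes G: "smooth_fun G"
  shows "diter ds (slice_remainder G x i t) y = (1 / of_real t) *
     (diter (map Inr ds) G (vjoin (x + t *\<^sub>R axis i 1) y) - diter (map Inr ds) G (vjoin x y)
       - t *\<^sub>R dpart (Inl i) (diter (map Inr ds) G) (vjoin x y))"
proof -
  have "dpart (Inl i) (diter (map Inr ds) G) = diter (map Inr ds) (dpart (Inl i) G)"
    by (rule dpart_diter_commute[OF G])
  moreover have s: "smooth_fun (slice G x')" "smooth_fun (slice (dpart (Inl i) G) x')" for x'
    using smooth_fun_slice smooth_fun_diter[OF G, of "[Inl i]"] G by auto
  moreover have s2: "smooth_fun (\<lambda>y. slice G x' y + c * slice G x y)" for x' c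
    by (rule smooth_fun_lincomb[OF s(1) s(1)])
  moreover have s3: "smooth_fun (\<lambda>y. (slice G x' y + c * slice G x y) + d * slice (dpart (Inl i) G) x y)" for x' c d
    by (rule smooth_fun_lincomb[OF s2 s(2)])
  ultimately show ?thesis
    unfolding slice_remainder_def diter_scale[OF s3] diter_lincomb[OF s2 s(2)] diter_lincomb[OF s(1) s(1)]
      diter_slice
    by (simp add: slice_def scaleR_conv_of_real)
qed

section \<open>Pairing slices with a functional\<close>

context
  fixes M :: "'g \<Rightarrow> real^'k1::finite \<Rightarrow> real"
    and N :: "'w \<Rightarrow> real^'k2::finite \<Rightarrow> real"
  assumes M: "defining_family M" and N: "defining_family N" and dom: "dominated_at_infinity N"
begin

lemma weighted_slice_locally_bounded:
  fixes \<Phi> :: "real^('k1 + 'k2) \<Rightarrow> complex"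
  assumes bound: "\<And>g. \<exists>B. \<forall>x y. M g x * N w y * norm (\<Phi> (vjoin x y)) \<le> B"
  obtains U K where "open U" "x \<in> U" "\<And>x' y. x' \<in> U \<Longrightarrow> N w y * norm (\<Phi> (vjoin x' y)) \<le> K"
proof -
  obtain g U C where "open U" "x \<in> U" "0 < C" and C: "\<And>x'. x' \<in> U \<Longrightarrow> C \<le> M g x'"
    using defining_family_locally_positive[OF M, of x] by metis
  obtain B where B: "\<And>x y. M g x * N w y * norm (\<Phi> (vjoin x y)) \<le> B"
    using bound by blast
  have "N w y * norm (\<Phi> (vjoin x' y)) \<le> B / C" if "x' \<in> U" for x' y
  proof -
    have "C * (N w y * norm (\<Phi> (vjoin x' y))) \<le> M g x' * (N w y * norm (\<Phi> (vjoin x' y)))"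
      using C[OF that] defining_family_nonneg[OF N] by (simp add: mult_right_mono)
    also have "\<dots> \<le> B" using B by (simp add: mult.assoc)
    finally show ?thesis using \<open>0 < C\<close> by (simp add: pos_le_divide_eq mult.commute)
  qed
  with \<open>open U\<close> \<open>x \<in> U\<close> show ?thesis by (rule that)
qed

lemma eventually_weighted_slice_close_far:
  fixes \<Phi> :: "real^('k1 + 'k2) \<Rightarrow> complex"
  assumes bound: "\<And>g w. \<exists>B. \<forall>x y. M g x * N w y * norm (\<Phi> (vjoin x y)) \<le> B" and "0 < e"
  shows "\<exists>R. \<forall>\<^sub>F x' in nhds x. \<forall>y. R \<le> norm y \<longrightarrow>
           N w y * norm (\<Phi> (vjoin x' y) - \<Phi> (vjoin x y)) \<le> e"
proof -
  have N0: "\<And>w y. 0 \<le> N w y" using N by (rule defining_family_nonneg)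
  obtain w' where w': "\<And>\<epsilon>. 0 < \<epsilon> \<Longrightarrow> \<forall>\<^sub>F y in at_infinity. N w y \<le> \<epsilon> * N w' y"
    using dom unfolding dominated_at_infinity_def by blast
  obtain U K where "open U" "x \<in> U" and K: "\<And>x' y. x' \<in> U \<Longrightarrow> N w' y * norm (\<Phi> (vjoin x' y)) \<le> K"
    using weighted_slice_locally_bounded[where w = w' and x = x, OF bound] by metis
  have "0 \<le> K" using K[OF \<open>x \<in> U\<close>, of 0] N0 by (meson mult_nonneg_nonneg norm_ge_zero order_trans)
  define \<eta> where "\<eta> = e / (2 * K + 1)"
  have "0 < \<eta>" using \<open>0 < e\<close> \<open>0 \<le> K\<close> by (simp add: \<eta>_def)
  then obtain R where R: "\<And>y. R \<le> norm y \<Longrightarrow> N w y \<le> \<eta> * N w' y"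
    using w' unfolding eventually_at_infinity by blast
  have far: "N w y * norm (\<Phi> (vjoin x' y) - \<Phi> (vjoin x y)) \<le> e" if "x' \<in> U" "R \<le> norm y" for x' y
  proof -
    have "N w y * norm (\<Phi> (vjoin x' y) - \<Phi> (vjoin x y))
        \<le> (\<eta> * N w' y) * (norm (\<Phi> (vjoin x' y)) + norm (\<Phi> (vjoin x y)))"
      using R[OF that(2)] N0 \<open>0 < \<eta>\<close> by (intro mult_mono norm_triangle_ineq4) auto
    also have "\<dots> = \<eta> * (N w' y * norm (\<Phi> (vjoin x' y)) + N w' y * norm (\<Phi> (vjoin x y)))"
      by (simp add: algebra_simps)
    also have "\<dots> \<le> \<eta> * (2 * K)"
      using K[OF that(1), of y] K[OF \<open>x \<in> U\<close>, of y] \<open>0 < \<eta>\<close> by (intro mult_left_mono) auto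
    also have "\<dots> \<le> e"
      using \<open>0 < e\<close> \<open>0 \<le> K\<close> by (simp add: \<eta>_def field_simps)
    finally show ?thesis .
  qed
  have "\<forall>\<^sub>F x' in nhds x. x' \<in> U"
    using \<open>open U\<close> \<open>x \<in> U\<close> by (rule eventually_nhds_in_open)
  then have "\<forall>\<^sub>F x' in nhds x. \<forall>y. R \<le> norm y \<longrightarrow> N w y * norm (\<Phi> (vjoin x' y) - \<Phi> (vjoin x y)) \<le> e"
    by (rule eventually_mono) (use far in blast)
  then show ?thesis by blast
qed

lemma eventually_weighted_slice_close_near:
  fixes \<Phi> :: "real^('k1 + 'k2) \<Rightarrow> complex"
  assumes \<Phi>: "continuous_on UNIV \<Phi>" and "0 < e"
  shows "\<forall>\<^sub>F x' in nhds x. \<forall>y. norm y \<le> R \<longrightarrow> N w y * norm (\<Phi> (vjoin x' y) - \<Phi> (vjoin x y)) \<le> e"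
proof -
  obtain b where b: "\<And>y. y \<in> cball 0 R \<Longrightarrow> norm (N w y) \<le> b"
    using defining_family_bounded_image[OF N bounded_cball] unfolding bounded_iff by blast
  define K where "K = \<bar>b\<bar> + 1"
  have "0 < K" by (simp add: K_def)
  have K: "N w y \<le> K" if "norm y \<le> R" for y
    using b[of y] that abs_ge_self[of "N w y"] by (simp add: K_def)
  have "continuous_on UNIV (\<lambda>p. \<Phi> (vjoin (fst p) (snd p)))"
    by (rule continuous_on_compose2[OF \<Phi> continuous_on_vjoin]) auto
  then have "\<forall>\<^sub>F x' in nhds x. \<forall>y\<in>cball 0 R. dist (\<Phi> (vjoin x' y)) (\<Phi> (vjoin x y)) < e / K"
    using \<open>0 < e\<close> \<open>0 < K\<close>
    by (intro eventually_uniformly_close_on_compact[where f = "\<lambda>x y. \<Phi> (vjoin x y)"]) auto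
  then show ?thesis
  proof (rule eventually_mono, intro allI impI)
    fix x' and y :: "real^'k2" assume close: "\<forall>y\<in>cball 0 R. dist (\<Phi> (vjoin x' y)) (\<Phi> (vjoin x y)) < e / K"
      and "norm y \<le> R"
    then have "N w y * norm (\<Phi> (vjoin x' y) - \<Phi> (vjoin x y)) \<le> K * (e / K)"
      using K defining_family_nonneg[OF N] \<open>0 < K\<close>
      by (intro mult_mono) (auto simp: dist_norm less_imp_le)
    then show "N w y * norm (\<Phi> (vjoin x' y) - \<Phi> (vjoin x y)) \<le> e"
      using \<open>0 < K\<close> by simp
  qed
qed

lemma eventually_weighted_slice_close:
  fixes \<Phi> :: "real^('k1 + 'k2) \<Rightarrow> complex"
  assumes \<Phi>: "continuous_on UNIV \<Phi>"
    and bound: "\<And>g w. \<exists>B. \<forall>x y. M g x * N w y * norm (\<Phi> (vjoin x y)) \<le> B"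
    and "0 < e"
  shows "\<forall>\<^sub>F x' in nhds x. \<forall>y. N w y * norm (\<Phi> (vjoin x' y) - \<Phi> (vjoin x y)) \<le> e"
proof -
  obtain R where "\<forall>\<^sub>F x' in nhds x. \<forall>y. R \<le> norm y \<longrightarrow>
      N w y * norm (\<Phi> (vjoin x' y) - \<Phi> (vjoin x y)) \<le> e"
    using eventually_weighted_slice_close_far[OF bound \<open>0 < e\<close>] by blast
  moreover have "\<forall>\<^sub>F x' in nhds x. \<forall>y. norm y \<le> R \<longrightarrow>
      N w y * norm (\<Phi> (vjoin x' y) - \<Phi> (vjoin x y)) \<le> e"
    by (rule eventually_weighted_slice_close_near[OF \<Phi> \<open>0 < e\<close>])
  ultimately show ?thesis
    by eventually_elim (meson nle_le)
qed

lemma eventually_slice_diter_close: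
  assumes G: "in_K (tensor_family M N) G" and "0 < e"
  shows "\<forall>\<^sub>F x' in nhds x. \<forall>ds. length ds \<le> m \<longrightarrow>
           (\<forall>y. N w y * norm (diter ds G (vjoin x' y) - diter ds G (vjoin x y)) \<le> e)"
proof -
  have "\<forall>\<^sub>F x' in nhds x. \<forall>y. N w y * norm (diter ds G (vjoin x' y) - diter ds G (vjoin x y)) \<le> e" for ds
  proof (rule eventually_weighted_slice_close[OF _ _ \<open>0 < e\<close>])
    show "continuous_on UNIV (diter ds G)"
      using G smooth_fun_continuous_on by (auto simp: in_K_def)
    fix g w'
    show "\<exists>B. \<forall>x y. M g x * N w' y * norm (diter ds G (vjoin x y)) \<le> B"
      using in_K_tensor_bound[OF G, of "length ds" g w'] by (metis order_refl)
  qed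
  then have "\<forall>\<^sub>F x' in nhds x. \<forall>ds\<in>{ds. set ds \<subseteq> UNIV \<and> length ds \<le> m}.
      \<forall>y. N w y * norm (diter ds G (vjoin x' y) - diter ds G (vjoin x y)) \<le> e"
    by (intro eventually_ball_finite finite_lists_length_le) auto
  then show ?thesis by (rule eventually_mono) auto
qed

lemma continuous_on_dual_slice:
  assumes v: "in_K_dual N v" and G: "in_K (tensor_family M N) G"
  shows "continuous_on UNIV (\<lambda>x. v (slice G x))"
proof (intro continuous_at_imp_continuous_on ballI)
  fix x
  have N0: "\<And>w y. 0 \<le> N w y" using N by (rule defining_family_nonneg)
  have K: "in_K N (slice G x')" for x' by (rule in_K_slice[OF M N0 G])
  have S: "smooth_fun (slice G x')" for x' using K by (simp add: in_K_def)
  have "((\<lambda>x'. v (\<lambda>y. slice G x' y + (-1) * slice G x y)) \<longlongrightarrow> 0) (at x)"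
  proof (rule K_dual_tendsto_zero[OF N0 v])
    show "in_K N (\<lambda>y. slice G x' y + (-1) * slice G x y)" for x'
      by (rule in_K_lincomb[OF N0 K K])
    fix w m and e :: real assume "0 < e"
    have "\<forall>\<^sub>F x' in nhds x. seminorm_K N w m (\<lambda>y. slice G x' y + (-1) * slice G x y) \<le> e"
      using eventually_slice_diter_close[OF G \<open>0 < e\<close>, where x = x and m = m and w = w]
    proof (rule eventually_mono)
      fix x' assume "\<forall>ds. length ds \<le> m \<longrightarrow>
          (\<forall>y. N w y * norm (diter ds G (vjoin x' y) - diter ds G (vjoin x y)) \<le> e)"
      then show "seminorm_K N w m (\<lambda>y. slice G x' y + (-1) * slice G x y) \<le> e"
        by (intro seminorm_K_le) (simp only: diter_lincomb[OF S S] diter_slice, simp add: slice_def)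
    qed
    then show "\<forall>\<^sub>F x' in at x. seminorm_K N w m (\<lambda>y. slice G x' y + (-1) * slice G x y) \<le> e"
      unfolding eventually_at_filter by (auto elim: eventually_mono)
  qed
  moreover have "v (\<lambda>y. slice G x' y + (-1) * slice G x y) = v (slice G x') - v (slice G x)" for x'
    using K_dual_lincomb[OF N0 v K K, where c = "-1"] by simp
  ultimately show "isCont (\<lambda>x. v (slice G x)) x"
    unfolding isCont_def by (subst Lim_null) simp
qed

lemma in_K_slice_remainder:
  assumes G: "in_K (tensor_family M N) G"
  shows "in_K N (slice_remainder G x i t)"
proof -
  have N0: "\<And>w y. 0 \<le> N w y" using N by (rule defining_family_nonneg)
  have "in_K (tensor_family M N) (dpart (Inl i) G)"
    using in_K_diter[OF G, of "[Inl i]"] by simp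
  then have "in_K N (slice (dpart (Inl i) G) x)" by (rule in_K_slice[OF M N0])
  moreover have "in_K N (slice G x')" for x' by (rule in_K_slice[OF M N0 G])
  ultimately show ?thesis
    unfolding slice_remainder_def by (intro in_K_scale in_K_lincomb N0)
qed

lemma eventually_seminorm_slice_remainder_le:
  assumes G: "in_K (tensor_family M N) G" and "0 < e"
  shows "\<forall>\<^sub>F t in at 0. seminorm_K N w m (slice_remainder G x i t) \<le> e"
proof -
  have sG: "smooth_fun G" using G by (simp add: in_K_def)
  have "in_K (tensor_family M N) (dpart (Inl i) G)"
    using in_K_diter[OF G, of "[Inl i]"] by simp
  from eventually_slice_diter_close[OF this \<open>0 < e\<close>, where x = x and m = m and w = w]
  obtain \<delta> where "0 < \<delta>" and \<delta>: "\<And>x' ds y. dist x' x < \<delta> \<Longrightarrow> length ds \<le> m \<Longrightarrow>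
      N w y * norm (diter ds (dpart (Inl i) G) (vjoin x' y) - diter ds (dpart (Inl i) G) (vjoin x y)) \<le> e"
    unfolding eventually_nhds_metric by blast
  have "seminorm_K N w m (slice_remainder G x i t) \<le> e" if "t \<noteq> 0" "\<bar>t\<bar> < \<delta>" for t
  proof (rule seminorm_K_le)
    fix ds :: "'k2 list" and y assume "length ds \<le> m"
    let ?\<Phi> = "diter (map Inr ds) G"
    have "N w y * norm (?\<Phi> (vjoin (x + t *\<^sub>R axis i 1) y) - ?\<Phi> (vjoin x y)
                        - t *\<^sub>R dpart (Inl i) ?\<Phi> (vjoin x y)) \<le> \<bar>t\<bar> * e"
    proof (rule weighted_slice_increment_le)
      show "smooth_fun ?\<Phi>" by (rule smooth_fun_diter[OF sG])
      show "0 \<le> N w y" using N by (rule defining_family_nonneg)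
      fix s assume "s \<in> closed_segment 0 t"
      then have "dist (x + s *\<^sub>R axis i 1) x < \<delta>"
        using that by (auto simp: closed_segment_eq_real_ivl dist_norm split: if_splits)
      then show "N w y * norm (dpart (Inl i) ?\<Phi> (vjoin (x + s *\<^sub>R axis i 1) y) - dpart (Inl i) ?\<Phi> (vjoin x y)) \<le> e"
        using \<delta>[of _ "map Inr ds"] \<open>length ds \<le> m\<close> by (simp add: dpart_diter_commute[OF sG])
    qed
    then show "N w y * norm (diter ds (slice_remainder G x i t) y) \<le> e"
      using \<open>t \<noteq> 0\<close>
      by (simp add: diter_slice_remainder[OF sG] norm_mult norm_divide pos_divide_le_eq mult.commute)
  qed
  then show ?thesis
    unfolding eventually_at using \<open>0 < \<delta>\<close> by (auto simp: dist_norm)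
qed

lemma has_vector_derivative_dual_slice:
  assumes v: "in_K_dual N v" and G: "in_K (tensor_family M N) G"
  shows "((\<lambda>t. v (slice G (x + t *\<^sub>R axis i 1))) has_vector_derivative v (slice (dpart (Inl i) G) x)) (at 0)"
proof -
  have N0: "\<And>w y. 0 \<le> N w y" using N by (rule defining_family_nonneg)
  define f where "f = (\<lambda>t. v (slice G (x + t *\<^sub>R axis i 1)))"
  define A where "A = v (slice (dpart (Inl i) G) x)"
  have "in_K (tensor_family M N) (dpart (Inl i) G)"
    using in_K_diter[OF G, of "[Inl i]"] by simp
  then have KA: "in_K N (slice (dpart (Inl i) G) x)" by (rule in_K_slice[OF M N0])
  have K: "in_K N (slice G x')" for x' by (rule in_K_slice[OF M N0 G])
  have "v (slice_remainder G x i t) = (1 / of_real t) * (f t - f 0 - t *\<^sub>R A)" for t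
  proof -
    let ?r = "\<lambda>y. slice G (x + t *\<^sub>R axis i 1) y + (-1) * slice G x y"
    have Kr: "in_K N ?r" by (rule in_K_lincomb[OF N0 K K])
    have "v (slice_remainder G x i t) = (1 / of_real t) * v (\<lambda>y. ?r y + (- of_real t) * slice (dpart (Inl i) G) x y)"
      unfolding slice_remainder_def by (rule K_dual_scale[OF v in_K_lincomb[OF N0 Kr KA]])
    also have "\<dots> = (1 / of_real t) * (v ?r + (- of_real t) * A)"
      unfolding A_def K_dual_lincomb[OF N0 v Kr KA] ..
    also have "v ?r = f t - f 0"
      unfolding K_dual_lincomb[OF N0 v K K] by (simp add: f_def)
    finally show ?thesis by (simp add: scaleR_conv_of_real)
  qed
  moreover have "((\<lambda>t. v (slice_remainder G x i t)) \<longlongrightarrow> 0) (at 0)"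
    using in_K_slice_remainder[OF G] eventually_seminorm_slice_remainder_le[OF G]
    by (rule K_dual_tendsto_zero[OF N0 v])
  ultimately have "((\<lambda>t. (1 / of_real t) * (f t - f 0 - t *\<^sub>R A)) \<longlongrightarrow> 0) (at 0)"
    by simp
  then have "((\<lambda>t. norm (f t - f 0 - t *\<^sub>R A) / norm t) \<longlongrightarrow> 0) (at 0)"
    using tendsto_norm_zero by (fastforce simp: norm_mult norm_divide)
  then have "(f has_derivative (\<lambda>t. t *\<^sub>R A)) (at 0)"
    by (simp add: has_derivative_iff_norm bounded_linear_scaleR_left)
  then show ?thesis by (simp add: has_vector_derivative_def f_def A_def)
qed

context
  fixes h :: "real^('k1 + 'k2) \<Rightarrow> complex"
    and v :: "(real^'k2 \<Rightarrow> complex) \<Rightarrow> complex"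
  assumes h: "in_K (tensor_family M N) h" and v: "in_K_dual N v"
begin

lemma diter_dual_slice: "diter ds (\<lambda>x. v (slice h x)) = (\<lambda>x. v (slice (diter (map Inl ds) h) x))"
proof (induction ds)
  case (Cons i ds)
  have "dpart i (\<lambda>x. v (slice (diter (map Inl ds) h) x)) x = v (slice (dpart (Inl i) (diter (map Inl ds) h)) x)" for x
    unfolding dpart_def[of i]
    by (rule vector_derivative_at[OF has_vector_derivative_dual_slice[OF v in_K_diter[OF h]]])
  with Cons show ?case by auto
qed simp

lemma smooth_fun_dual_slice: "smooth_fun (\<lambda>x. v (slice h x))"
  unfolding smooth_fun_def diter_dual_slice
proof (intro allI conjI)
  fix ds
  show "continuous_on UNIV (\<lambda>x. v (slice (diter (map Inl ds) h) x))"
    by (rule continuous_on_dual_slice[OF v in_K_diter[OF h]])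
  show "(\<lambda>t. v (slice (diter (map Inl ds) h) (x + t *\<^sub>R axis i 1))) differentiable (at 0)" for i x
    using has_vector_derivative_dual_slice[OF v in_K_diter[OF h]] differentiableI_vector by blast
qed

lemma in_K_dual_slice: "in_K M (\<lambda>x. v (slice h x))"
  unfolding in_K_iff_diter_bounded
proof (intro conjI allI smooth_fun_dual_slice)
  fix g m
  have N0: "\<And>w y. 0 \<le> N w y" using N by (rule defining_family_nonneg)
  have M0: "\<And>x. 0 \<le> M g x" using M by (rule defining_family_nonneg)
  obtain W C where "0 \<le> C" and bound: "\<And>f. in_K N f \<Longrightarrow> norm (v f) \<le> C * (\<Sum>(w, m')\<in>W. seminorm_K N w m' f)"
    using K_dual_bound[OF v] by metis
  have "\<forall>w m'. \<exists>B. \<forall>es x y. length es \<le> m + m' \<longrightarrow> M g x * N w y * norm (diter es h (vjoin x y)) \<le> B"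
    using in_K_tensor_bound[OF h] by metis
  then obtain B where B: "\<And>w m' es x y. length es \<le> m + m' \<Longrightarrow> M g x * N w y * norm (diter es h (vjoin x y)) \<le> B w m'"
    by metis
  have "M g x * norm (diter ds (\<lambda>x. v (slice h x)) x) \<le> C * (\<Sum>(w, m')\<in>W. max 0 (B w m'))"
    if "length ds \<le> m" for ds x
  proof -
    let ?H = "diter (map Inl ds) h"
    have "M g x * seminorm_K N w m' (slice ?H x) \<le> max 0 (B w m')" for w m'
    proof (rule mult_seminorm_K_le[OF M0])
      fix es :: "'k2 list" and y assume "length es \<le> m'"
      then have "M g x * N w y * norm (diter (map Inr es @ map Inl ds) h (vjoin x y)) \<le> B w m'"
        using \<open>length ds \<le> m\<close> by (intro B) simp
      then show "M g x * (N w y * norm (diter es (slice ?H x) y)) \<le> max 0 (B w m')"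
        unfolding diter_slice by (simp add: diter_append slice_def mult.assoc)
    qed simp
    then have "M g x * (C * (\<Sum>(w, m')\<in>W. seminorm_K N w m' (slice ?H x))) \<le> C * (\<Sum>(w, m')\<in>W. max 0 (B w m'))"
      using \<open>0 \<le> C\<close> by (simp add: sum_distrib_left case_prod_beta mult.left_commute mult_left_mono sum_mono)
    moreover have "M g x * norm (v (slice ?H x)) \<le> M g x * (C * (\<Sum>(w, m')\<in>W. seminorm_K N w m' (slice ?H x)))"
      using bound[OF in_K_slice[OF M N0 in_K_diter[OF h]]] M0 by (rule mult_left_mono)
    ultimately show ?thesis by (simp add: diter_dual_slice)
  qed
  then show "\<exists>B. \<forall>ds x. length ds \<le> m \<longrightarrow> M g x * norm (diter ds (\<lambda>x. v (slice h x)) x) \<le> B"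
    by blast
qed

lemma dmulti_dual_slice:
  "dmulti mu (\<lambda>x. v (slice h x)) x = v (slice (dmulti (mi_lift_left mu :: 'k1 + 'k2 \<Rightarrow> nat) h) x)"
proof -
  define ds where "ds = (SOME ds. \<forall>i. count_list ds i = mu i)"
  have "count_list (map Inl ds) i = mi_lift_left mu i" for i :: "'k1 + 'k2"
    using count_list_dmulti_list[of mu]
    by (cases i) (auto simp: ds_def mi_lift_left_def count_list_map_conv count_list_0_iff)
  then have "dmulti (mi_lift_left mu :: 'k1 + 'k2 \<Rightarrow> nat) h = diter (map Inl ds) h"
    using h by (intro dmulti_eq_diter) (simp_all add: in_K_def)
  then show ?thesis
    by (simp add: dmulti_def diter_dual_slice flip: ds_def)
qed

end

end

theorem lemma3p5:
  fixes M :: "'g \<Rightarrow> real^'k1::finite \<Rightarrow> real"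
    and N :: "'w \<Rightarrow> real^'k2::finite \<Rightarrow> real"
    and h :: "real^('k1 + 'k2) \<Rightarrow> complex"
  assumes "defining_family M" and "defining_family N"
    and "in_K (tensor_family M N) h"
    and I: "\<forall>w. \<exists>w' L. bounded (range L) \<and> integrable lborel L \<and> (\<forall>y. 0 \<le> L y) \<and>
              (\<forall>y. N w y \<le> L y * N w' y) \<and> (L \<longlongrightarrow> 0) at_infinity"
    and II: "\<forall>w. \<exists>w' B C. open B \<and> 0 \<in> B \<and> C > 0 \<and>
              (\<forall>y y'. y' \<in> B \<longrightarrow> N w y \<le> C * N w' (y + y'))"
  shows "(\<forall>x. in_K N (\<lambda>y. h (vjoin x y))) \<and>
         (\<forall>v. in_K_dual N v \<longrightarrow>
            in_K M (\<lambda>x. v (\<lambda>y. h (vjoin x y))) \<and>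
            (\<forall>mu x. dmulti mu (\<lambda>x. v (\<lambda>y. h (vjoin x y))) x
                    = v (\<lambda>y. dmulti (mi_lift_left mu :: 'k1 + 'k2 \<Rightarrow> nat) h (vjoin x y))))"
proof -
  have N0: "\<And>w y. 0 \<le> N w y" using assms(2) by (rule defining_family_nonneg)
  have dom: "dominated_at_infinity N"
    using I by (intro dominated_at_infinityI[OF N0]) blast
  note slices = in_K_slice[OF assms(1) N0 assms(3)]
    and pairings = in_K_dual_slice[OF assms(1,2) dom assms(3)] dmulti_dual_slice[OF assms(1,2) dom assms(3)]
  show ?thesis
    using slices pairings by (simp add: slice_def)
qed

end
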